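(* Let $f:\mathbb{R}^n\times\mathbb{R}^p\to[-\infty,\infty]$ be a proper nearly convex function and $F:\mathbb{R}^n\rightrightarrows\mathbb{R}^p$ a nearly convex set-valued mapping with $\operatorname{ri}(\operatorname{dom} f)\cap\operatorname{ri}(\operatorname{gph} F)\neq\emptyset$. Let $\mu(x)=\inf\{f(x,y):y\in F(x)\}$ and $S(x)=\{y\in F(x): f(x,y)=\mu(x)\}$. Take $\bar x\in\mathbb{R}^n$ with $\mu(\bar x)\in\mathbb{R}$ and $S(\bar x)\neq\emptyset$. Then for every $\bar y\in S(\bar x)$, $$\partial\mu(\bar x)=\bigcup_{(u,v)\in\partial f(\bar x,\bar y)}\big[u+D^*F(\bar x,\bar y)(v)\big].$$
   Context: A set $\Omega\subset\mathbb{R}^k$ is nearly convex if there is a convex set $C$ with $C\subset\Omega\subset\overline{C}$; $\operatorname{ri}\Omega=\{a\in\Omega:\exists\delta>0,\ B(a;\delta)\cap\operatorname{aff}\Omega\subset\Omega\}$. A function is nearly convex if its epigraph $\{(x,\lambda):f(x)\le\lambda\}$ is nearly convex; proper if its domain $\{f<\infty\}$ is nonempty and $f>-\infty$; a set-valued mapping is nearly convex if its graph $\operatorname{gph}F=\{(x,y):y\in F(x)\}$ is. Normal cone: $N(\bar z;\Omega)=\{v:\langle v,z-\bar z\rangle\le0\ \forall z\in\Omega\}$ for $\bar z\in\Omega$. Coderivative: $D^*F(\bar x,\bar y)(v)=\{u\in\mathbb{R}^n:(u,-v)\in N((\bar x,\bar y);\operatorname{gph}F)\}$. Subdifferential of $\varphi$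 at $\bar z$ with $\varphi(\bar z)\in\mathbb{R}$: $\partial\varphi(\bar z)=\{w:\langle w,z-\bar z\rangle\le\varphi(z)-\varphi(\bar z)\ \forall z\}$. *)

theory Defs
  imports "HOL-Analysis.Analysis" "HOL-Library.Extended_Real"
begin

definition nearly_convex_set :: "'a::real_normed_vector set \<Rightarrow> bool" where
  "nearly_convex_set \<Omega> \<longleftrightarrow> (\<exists>C. convex C \<and> C \<subseteq> \<Omega> \<and> \<Omega> \<subseteq> closure C)"

definition epigraph :: "('a \<Rightarrow> ereal) \<Rightarrow> ('a \<times> real) set" where
  "epigraph f = {(x, t). f x \<le> ereal t}"

definition nearly_convex_fun :: "('a::real_normed_vector \<Rightarrow> ereal) \<Rightarrow> bool" where
  "nearly_convex_fun f \<longleftrightarrow> nearly_convex_set (epigraph f)"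

definition edom :: "('a \<Rightarrow> ereal) \<Rightarrow> 'a set" where
  "edom f = {x. f x < \<infinity>}"

definition proper_fun :: "('a \<Rightarrow> ereal) \<Rightarrow> bool" where
  "proper_fun f \<longleftrightarrow> edom f \<noteq> {} \<and> (\<forall>x. f x > -\<infinity>)"

definition gph :: "('a \<Rightarrow> 'b set) \<Rightarrow> ('a \<times> 'b) set" where
  "gph F = {(x, y). y \<in> F x}"

definition nearly_convex_map :: "('a::real_normed_vector \<Rightarrow> 'b::real_normed_vector set) \<Rightarrow> bool" where
  "nearly_convex_map F \<longleftrightarrow> nearly_convex_set (gph F)"

text \<open>Normal cone, used only at points of the set.\<close>
definition normal_cone :: "'a::real_inner \<Rightarrow> 'a set \<Rightarrow> 'a set" where
  "normal_cone zb \<Omega> = {v. \<forall>z\<in>\<Omega>. inner v (z - zb) \<le> 0}"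

definition coderiv ::
  "('a::real_inner \<Rightarrow> 'b::real_inner set) \<Rightarrow> 'a \<Rightarrow> 'b \<Rightarrow> 'b \<Rightarrow> 'a set" where
  "coderiv F xb yb v = {u. (u, -v) \<in> normal_cone (xb, yb) (gph F)}"

text \<open>Subdifferential, used only at points where the function is finite.\<close>
definition subdiff :: "('a::real_inner \<Rightarrow> ereal) \<Rightarrow> 'a \<Rightarrow> 'a set" where
  "subdiff \<phi> zb = {w. \<forall>z. ereal (inner w (z - zb)) \<le> \<phi> z - \<phi> zb}"

definition optval :: "('a \<times> 'b \<Rightarrow> ereal) \<Rightarrow> ('a \<Rightarrow> 'b set) \<Rightarrow> 'a \<Rightarrow> ereal" where
  "optval f F x = Inf {f (x, y) | y. y \<in> F x}"

definition solmap :: "('a \<times> 'b \<Rightarrow> ereal) \<Rightarrow> ('a \<Rightarrow> 'b set) \<Rightarrow> 'a \<Rightarrow> 'b set" where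
  "solmap f F x = {y \<in> F x. f (x, y) = optval f F x}"

end

theory Submission
  imports Defs
begin

text \<open>If \<open>u\<close> is a subgradient of the marginal function \<open>\<mu>\<close> at \<open>x\<close> and \<open>y\<close> is a minimiser,
  then \<open>(u, 0)\<close> is a subgradient at \<open>(x, y)\<close> of \<open>f\<close> restricted to \<open>gph F\<close>, because
  \<open>\<mu> x' \<le> f (x', y')\<close> on the graph. A sum rule splits it into a subgradient \<open>(u\<^sub>1, v)\<close> of \<open>f\<close>
  and a normal \<open>(u\<^sub>2, -v)\<close> to the graph, that is \<open>u\<^sub>2 \<in> D\<^sup>*F(x, y)(v)\<close>. The sum rule comes from
  separating the epigraph of \<open>f\<close>, tilted by the subgradient, from \<open>gph F \<times> (-\<infinity>, 0)\<close>: nearly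
  convex sets separate like their convex cores, and the qualification condition on relative
  interiors rules out a vertical hyperplane, so the separating functional can be normalised.
  The reverse inclusion is a direct estimate.\<close>

lemma inner_eq_if_minimal_at_rel_interior:
  fixes D :: "'n::euclidean_space set"
  assumes z0: "z0 \<in> rel_interior D" and min: "\<And>z. z \<in> D \<Longrightarrow> v \<bullet> z0 \<le> v \<bullet> z"
    and z: "z \<in> D"
  shows "v \<bullet> z = v \<bullet> z0"
proof (cases "z = z0")
  case False
  obtain e where e: "e > 0" "cball z0 e \<inter> affine hull D \<subseteq> D"
    using z0 mem_rel_interior_cball by blast
  have nz: "norm (z - z0) > 0" using False by simp
  define t where "t = e / norm (z - z0)"
  have t: "t > 0" using e nz by (simp add: t_def)
  \<comment> \<open>the point reflected beyond \<open>z0\<close> away from \<open>z\<close> still lies in \<open>D\<close>\<close>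
  define p where "p = (1 + t) *\<^sub>R z0 + (- t) *\<^sub>R z"
  have "p \<in> affine hull D"
    unfolding p_def using z0 rel_interior_subset z
    by (intro mem_affine[OF affine_affine_hull]) (auto intro: hull_inc)
  moreover have "dist z0 p = e"
  proof -
    have "z0 - p = t *\<^sub>R (z - z0)" by (simp add: p_def algebra_simps)
    then show ?thesis using t nz e by (simp add: dist_norm t_def)
  qed
  ultimately have "p \<in> D" using e by auto
  then have "v \<bullet> z0 \<le> v \<bullet> p" by (rule min)
  also have "v \<bullet> p = v \<bullet> z0 - t * (v \<bullet> (z - z0))"
    by (simp add: p_def algebra_simps inner_add_right inner_diff_right)
  finally have "v \<bullet> (z - z0) \<le> 0" using t by (simp add: mult_le_0_iff)
  with min[OF z] show ?thesis by (simp add: inner_diff_right)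
qed simp

lemma nearly_convex_set_affine_image:
  fixes E :: "'n::euclidean_space set"
  assumes "nearly_convex_set E" "linear L"
  shows "nearly_convex_set ((\<lambda>x. L x + b) ` E)"
proof -
  obtain C where C: "convex C" "C \<subseteq> E" "E \<subseteq> closure C"
    using assms(1) unfolding nearly_convex_set_def by blast
  let ?T = "\<lambda>x. L x + b"
  have "continuous_on UNIV ?T"
    using assms(2) by (intro continuous_intros linear_continuous_on) (simp add: linear_conv_bounded_linear)
  then have "?T ` closure C \<subseteq> closure (?T ` C)"
    by (rule image_closure_subset[OF continuous_on_subset]) (auto intro: closure_subset[THEN subsetD])
  moreover have "?T ` C = (+) b ` L ` C" by (auto simp: image_image add.commute)
  then have "convex (?T ` C)"
    using convex_linear_image[OF assms(2) C(1)] convex_translation by metis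
  ultimately show ?thesis
    unfolding nearly_convex_set_def using C by (intro exI[of _ "?T ` C"]) blast
qed

lemma nearly_convex_set_Times:
  assumes "nearly_convex_set S" "nearly_convex_set T"
  shows "nearly_convex_set (S \<times> T)"
proof -
  obtain C D where "convex C" "C \<subseteq> S" "S \<subseteq> closure C" "convex D" "D \<subseteq> T" "T \<subseteq> closure D"
    using assms unfolding nearly_convex_set_def by metis
  moreover have "S \<times> T \<subseteq> closure (C \<times> D)"
    using \<open>S \<subseteq> closure C\<close> \<open>T \<subseteq> closure D\<close> by (auto simp: closure_Times)
  ultimately show ?thesis
    unfolding nearly_convex_set_def by (intro exI[of _ "C \<times> D"]) (auto intro: convex_Times)
qed

lemma nearly_convex_tilted_epigraph:
  fixes f :: "'n::euclidean_space \<Rightarrow> ereal"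
  assumes "nearly_convex_fun f"
  shows "nearly_convex_set {(z, l). f z \<le> ereal (l + w \<bullet> z + r)}"
proof -
  define L where "L = (\<lambda>p. (fst p, snd p - w \<bullet> fst p))"
  have "linear L" unfolding L_def linear_iff by (auto simp: inner_add_right algebra_simps)
  have "{(z, l). f z \<le> ereal (l + w \<bullet> z + r)} = (\<lambda>p. L p + (0, - r)) ` epigraph f"
  proof (intro set_eqI iffI)
    fix p assume "p \<in> {(z, l). f z \<le> ereal (l + w \<bullet> z + r)}"
    then obtain z l where "p = (z, l)" "f z \<le> ereal (l + w \<bullet> z + r)" by blast
    then show "p \<in> (\<lambda>p. L p + (0, - r)) ` epigraph f"
      by (intro image_eqI[of _ _ "(z, l + w \<bullet> z + r)"]) (auto simp: L_def epigraph_def)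
  qed (auto simp: L_def epigraph_def)
  with nearly_convex_set_affine_image[OF assms[unfolded nearly_convex_fun_def] \<open>linear L\<close>]
  show ?thesis by simp
qed

lemma nearly_convex_set_separation:
  fixes S T :: "'n::euclidean_space set"
  assumes S: "nearly_convex_set S" "S \<noteq> {}" and T: "nearly_convex_set T" "T \<noteq> {}"
    and disj: "S \<inter> T = {}"
  obtains a where "a \<in> span {p - q | p q. p \<in> S \<and> q \<in> T}" "a \<noteq> 0"
    "\<And>p q. p \<in> closure S \<Longrightarrow> q \<in> closure T \<Longrightarrow> a \<bullet> q \<le> a \<bullet> p"
proof -
  obtain C where C: "convex C" "C \<subseteq> S" "S \<subseteq> closure C"
    using S unfolding nearly_convex_set_def by blast
  obtain D where D: "convex D" "D \<subseteq> T" "T \<subseteq> closure D"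
    using T unfolding nearly_convex_set_def by blast
  have "C \<noteq> {}" "D \<noteq> {}" using S(2) T(2) C(3) D(3) by auto
  define A where "A = {p - q | p q. p \<in> C \<and> q \<in> D}"
  have "A = (\<Union>p\<in>C. \<Union>q\<in>D. {p - q})" unfolding A_def by blast
  then have convex: "convex A" using convex_differences[OF C(1) D(1)] by simp
  have nonempty: "A \<noteq> {}" using \<open>C \<noteq> {}\<close> \<open>D \<noteq> {}\<close> unfolding A_def by blast
  have zero: "0 \<notin> A"
  proof
    assume "0 \<in> A"
    then obtain p q where "p \<in> C" "q \<in> D" "p = q" unfolding A_def by auto
    then show False using C(2) D(2) disj by blast
  qed
  obtain a where a: "a \<in> span A" "a \<noteq> 0" "\<And>x. x \<in> A \<Longrightarrow> 0 \<le> a \<bullet> x"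
    using separating_hyperplane_set_0_inspan[OF convex nonempty zero] by metis
  show thesis
  proof (rule that)
    have "A \<subseteq> {p - q | p q. p \<in> S \<and> q \<in> T}"
      using C(2) D(2) unfolding A_def by blast
    then show "a \<in> span {p - q | p q. p \<in> S \<and> q \<in> T}"
      using a(1) span_mono by blast
    have sep: "a \<bullet> q \<le> a \<bullet> p" if "p \<in> C" "q \<in> D" for p q
    proof -
      have "p - q \<in> A" using that unfolding A_def by blast
      then show ?thesis using a(3)[of "p - q"] by (simp add: inner_diff_right)
    qed
    have sep_D: "closure D \<subseteq> {q. a \<bullet> q \<le> a \<bullet> p}" if "p \<in> C" for p
      by (rule closure_minimal) (use sep that in blast, rule closed_halfspace_le)
    have sep_CD: "closure C \<subseteq> {p. a \<bullet> q \<le> a \<bullet> p}" if "q \<in> closure D" for q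
      by (rule closure_minimal) (use sep_D that in blast, rule closed_halfspace_ge)
    have "closure S \<subseteq> closure C" "closure T \<subseteq> closure D"
      using C(3) D(3) by (metis closure_closure closure_mono)+
    then show "a \<bullet> q \<le> a \<bullet> p" if "p \<in> closure S" "q \<in> closure T" for p q
      using sep_CD that by blast
  qed (rule a(2))
qed

lemma inner_eq_if_separates_at_rel_interiors:
  fixes S T :: "'n::euclidean_space set"
  assumes S: "z0 \<in> rel_interior S" and T: "z0 \<in> rel_interior T"
    and sep: "\<And>p q. p \<in> S \<Longrightarrow> q \<in> T \<Longrightarrow> v \<bullet> q \<le> v \<bullet> p"
    and z: "z \<in> S \<union> T"
  shows "v \<bullet> z = v \<bullet> z0"
proof -
  have "z0 \<in> S" "z0 \<in> T" using S T rel_interior_subset by blast+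
  then have "v \<bullet> z = v \<bullet> z0" if "z \<in> S"
    using that sep by (intro inner_eq_if_minimal_at_rel_interior[OF S]) auto
  moreover have "(- v) \<bullet> z = (- v) \<bullet> z0" if "z \<in> T"
    using that sep \<open>z0 \<in> S\<close> by (intro inner_eq_if_minimal_at_rel_interior[OF T]) auto
  ultimately show ?thesis using z by auto
qed

lemma horizontal_separator_eq_0:
  fixes S T :: "('n::euclidean_space \<times> 'm::euclidean_space) set"
  assumes ri: "rel_interior (fst ` S) \<inter> rel_interior (fst ` T) \<noteq> {}"
    and span: "(v, 0) \<in> span {p - q | p q. p \<in> S \<and> q \<in> T}"
    and sep: "\<And>p q. p \<in> S \<Longrightarrow> q \<in> T \<Longrightarrow> v \<bullet> fst q \<le> v \<bullet> fst p"
  shows "v = 0"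
proof -
  obtain z0 where z0: "z0 \<in> rel_interior (fst ` S)" "z0 \<in> rel_interior (fst ` T)" using ri by blast
  have const: "v \<bullet> z = v \<bullet> z0" if "z \<in> fst ` S \<union> fst ` T" for z
    using inner_eq_if_separates_at_rel_interiors[OF z0 _ that] sep by blast
  have orth: "orthogonal (v, 0) x" if x: "x \<in> {p - q | p q. p \<in> S \<and> q \<in> T}" for x
  proof -
    obtain p q where pq: "x = p - q" "p \<in> S" "q \<in> T" using x by blast
    then have "fst p \<in> fst ` S \<union> fst ` T" "fst q \<in> fst ` S \<union> fst ` T" by auto
    then have "v \<bullet> fst p = v \<bullet> fst q" using const by metis
    then show ?thesis
      using pq(1) by (cases p, cases q) (simp add: orthogonal_def inner_diff_right)
  qed
  from orthogonal_to_span[OF span orth] show "v = 0" by (simp add: orthogonal_self zero_prod_def)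
qed

lemma subgradient_on_nonvertical_separation:
  fixes f :: "'n::euclidean_space \<Rightarrow> ereal"
  assumes pf: "proper_fun f" and ncf: "nearly_convex_fun f" and ncO: "nearly_convex_set \<Omega>"
    and qc: "rel_interior (edom f) \<inter> rel_interior \<Omega> \<noteq> {}"
    and zb: "zb \<in> \<Omega>" and fzb: "f zb = ereal c"
    and hw: "\<And>z. z \<in> \<Omega> \<Longrightarrow> ereal (w \<bullet> (z - zb) + c) \<le> f z"
  shows "\<exists>\<gamma> v. \<gamma> > 0 \<and> (\<forall>z l z' t. f z \<le> ereal (l + c + w \<bullet> (z - zb)) \<longrightarrow> z' \<in> \<Omega> \<longrightarrow> t \<le> 0 \<longrightarrow>
      v \<bullet> z' + \<gamma> * t \<le> v \<bullet> z + \<gamma> * l)"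
proof -
  define \<Theta> where "\<Theta> = {(z, l). f z \<le> ereal (l + w \<bullet> z + (c - w \<bullet> zb))}"
  have \<Theta>_iff: "(z, l) \<in> \<Theta> \<longleftrightarrow> f z \<le> ereal (l + c + w \<bullet> (z - zb))" for z l
    by (simp add: \<Theta>_def inner_diff_right algebra_simps)
  have zb\<Theta>: "(zb, l) \<in> \<Theta>" if "l \<ge> 0" for l
    using that by (simp add: \<Theta>_iff fzb)
  have disj: "\<Theta> \<inter> \<Omega> \<times> {..<0} = {}"
  proof safe
    fix z l assume "(z, l) \<in> \<Theta>" "z \<in> \<Omega>" "l < 0"
    then have "f z < ereal (w \<bullet> (z - zb) + c)"
      by (auto simp: \<Theta>_iff intro: le_less_trans)
    with hw[OF \<open>z \<in> \<Omega>\<close>] show "(z, l) \<in> {}" by simp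
  qed
  have nc\<Theta>: "nearly_convex_set \<Theta>"
    unfolding \<Theta>_def using ncf by (rule nearly_convex_tilted_epigraph)
  have nc\<Omega>: "nearly_convex_set (\<Omega> \<times> {..<0::real})"
    using ncO by (rule nearly_convex_set_Times) (auto simp: nearly_convex_set_def)
  have ne: "\<Theta> \<noteq> {}" "\<Omega> \<times> {..<0::real} \<noteq> {}" using zb zb\<Theta>[of 0] by auto
  obtain a where a: "a \<in> span {p - q | p q. p \<in> \<Theta> \<and> q \<in> \<Omega> \<times> {..<0}}" "a \<noteq> 0"
      "\<And>p q. p \<in> closure \<Theta> \<Longrightarrow> q \<in> closure (\<Omega> \<times> {..<0}) \<Longrightarrow> a \<bullet> q \<le> a \<bullet> p"
    using nearly_convex_set_separation[OF nc\<Theta> ne(1) nc\<Omega> ne(2) disj] by blast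
  obtain v \<gamma> where v\<gamma>: "a = (v, \<gamma>)" by (cases a)
  have sep: "v \<bullet> z' + \<gamma> * t \<le> v \<bullet> z + \<gamma> * l" if "(z, l) \<in> \<Theta>" "z' \<in> \<Omega>" "t \<le> 0" for z l z' t
    using a(3)[of "(z, l)" "(z', t)"] that closure_subset[of \<Theta>] closure_subset[of \<Omega>]
    by (auto simp: v\<gamma> closure_Times)
  have "\<gamma> \<ge> 0" using sep[OF zb\<Theta>[of 1] zb, of 0] by simp
  moreover have "\<gamma> \<noteq> 0"
  proof
    assume "\<gamma> = 0"
    have "fst ` \<Theta> = edom f"
    proof (intro equalityI subsetI)
      fix z assume "z \<in> fst ` \<Theta>"
      then show "z \<in> edom f" by (force simp: \<Theta>_iff edom_def intro: le_less_trans)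
    next
      fix z assume "z \<in> edom f"
      then obtain r where "f z = ereal r"
        using pf unfolding edom_def proper_fun_def by (cases "f z") auto
      then have "(z, r - c - w \<bullet> (z - zb)) \<in> \<Theta>" by (simp add: \<Theta>_iff)
      then show "z \<in> fst ` \<Theta>" by force
    qed
    then have ri: "rel_interior (fst ` \<Theta>) \<inter> rel_interior (fst ` (\<Omega> \<times> {..<0::real})) \<noteq> {}"
      using qc by simp
    have span: "(v, 0) \<in> span {p - q | p q. p \<in> \<Theta> \<and> q \<in> \<Omega> \<times> {..<0}}"
      using a(1) \<open>\<gamma> = 0\<close> by (simp add: v\<gamma>)
    have "v \<bullet> fst q \<le> v \<bullet> fst p" if "p \<in> \<Theta>" "q \<in> \<Omega> \<times> {..<0}" for p q
    proof -
      have "(fst p, snd p) \<in> \<Theta>" "fst q \<in> \<Omega>" using that by auto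
      from sep[OF this order_refl] show ?thesis by (simp add: \<open>\<gamma> = 0\<close>)
    qed
    then have "v = 0" by (rule horizontal_separator_eq_0[OF ri span])
    then show False using a(2) \<open>\<gamma> = 0\<close> by (simp add: v\<gamma> zero_prod_def)
  qed
  moreover have "v \<bullet> z' + \<gamma> * t \<le> v \<bullet> z + \<gamma> * l"
    if "f z \<le> ereal (l + c + w \<bullet> (z - zb))" "z' \<in> \<Omega>" "t \<le> 0" for z l z' t
    using sep[of z l z' t] that by (simp add: \<Theta>_iff)
  ultimately show ?thesis by (intro exI[of _ \<gamma>] exI[of _ v]) simp
qed

lemma subgradient_on_set_decomposition:
  fixes f :: "'n::euclidean_space \<Rightarrow> ereal"
  assumes pf: "proper_fun f" and "nearly_convex_fun f" and "nearly_convex_set \<Omega>"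
    and "rel_interior (edom f) \<inter> rel_interior \<Omega> \<noteq> {}"
    and zb: "zb \<in> \<Omega>" and fzb: "f zb = ereal c"
    and "\<And>z. z \<in> \<Omega> \<Longrightarrow> ereal (w \<bullet> (z - zb) + c) \<le> f z"
  shows "\<exists>w1 w2. w = w1 + w2 \<and> w1 \<in> subdiff f zb \<and> w2 \<in> normal_cone zb \<Omega>"
proof -
  obtain \<gamma> v where \<gamma>: "\<gamma> > 0" and sep:
    "\<And>z l z' t. f z \<le> ereal (l + c + w \<bullet> (z - zb)) \<Longrightarrow> z' \<in> \<Omega> \<Longrightarrow> t \<le> 0 \<Longrightarrow>
      v \<bullet> z' + \<gamma> * t \<le> v \<bullet> z + \<gamma> * l"
    using subgradient_on_nonvertical_separation[OF assms] by blast
  define n where "n = (1 / \<gamma>) *\<^sub>R v"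
  have "w - n \<in> subdiff f zb"
    unfolding subdiff_def
  proof (intro CollectI allI)
    fix z
    show "ereal ((w - n) \<bullet> (z - zb)) \<le> f z - f zb"
    proof (cases "f z")
      case (real r)
      then have "v \<bullet> zb \<le> v \<bullet> z + \<gamma> * (r - c - w \<bullet> (z - zb))"
        using sep[of z _ zb 0] zb by simp
      then have "n \<bullet> (zb - z) \<le> r - c - w \<bullet> (z - zb)"
        using \<gamma> by (simp add: n_def inner_diff_right field_simps)
      then show ?thesis
        using real fzb by (simp add: inner_diff_left inner_diff_right)
    qed (use pf fzb in \<open>auto simp: proper_fun_def\<close>)
  qed
  moreover have "n \<in> normal_cone zb \<Omega>"
    unfolding normal_cone_def
  proof (intro CollectI ballI)
    fix z assume "z \<in> \<Omega>"
    then have "v \<bullet> z \<le> v \<bullet> zb" using sep[of zb 0 z 0] fzb by simp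
    then show "n \<bullet> (z - zb) \<le> 0"
      using \<gamma> by (simp add: n_def inner_diff_right divide_right_mono)
  qed
  ultimately show ?thesis by (intro exI[of _ "w - n"] exI[of _ n]) simp
qed

lemma optval_le: "y \<in> F x \<Longrightarrow> optval f F x \<le> f (x, y)"
  unfolding optval_def by (rule Inf_lower) blast

lemma subdiff_optval_subset:
  fixes f :: "'a::euclidean_space \<times> 'b::euclidean_space \<Rightarrow> ereal" and F :: "'a \<Rightarrow> 'b set"
  assumes pf: "proper_fun f" and ncf: "nearly_convex_fun f" and ncF: "nearly_convex_map F"
    and qc: "rel_interior (edom f) \<inter> rel_interior (gph F) \<noteq> {}"
    and yb: "yb \<in> F xb" and val: "optval f F xb = ereal c" "f (xb, yb) = ereal c"
  shows "subdiff (optval f F) xb \<subseteq> (\<Union>(u, v)\<in>subdiff f (xb, yb). (\<lambda>w. u + w) ` coderiv F xb yb v)"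
proof
  fix u assume u: "u \<in> subdiff (optval f F) xb"
  have "ereal ((u, 0) \<bullet> (z - (xb, yb)) + c) \<le> f z" if "z \<in> gph F" for z
  proof -
    obtain x y where z: "z = (x, y)" "y \<in> F x" using \<open>z \<in> gph F\<close> by (auto simp: gph_def)
    have "ereal (u \<bullet> (x - xb)) \<le> optval f F x - optval f F xb"
      using u unfolding subdiff_def by blast
    then have "ereal (u \<bullet> (x - xb) + c) \<le> optval f F x" using val by (simp add: ereal_le_minus)
    also have "\<dots> \<le> f (x, y)" using z(2) by (rule optval_le)
    finally show ?thesis by (simp add: z)
  qed
  moreover have "(xb, yb) \<in> gph F" using yb by (simp add: gph_def)
  ultimately obtain w1 w2 where w: "(u, 0) = w1 + w2" "w1 \<in> subdiff f (xb, yb)"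
      "w2 \<in> normal_cone (xb, yb) (gph F)"
    using subgradient_on_set_decomposition[OF pf ncf ncF[unfolded nearly_convex_map_def] qc _ val(2)]
    by blast
  obtain u1 v u2 v2 where "w1 = (u1, v)" "w2 = (u2, v2)" by (cases w1, cases w2)
  with w have "u = u1 + u2" "(u1, v) \<in> subdiff f (xb, yb)" "u2 \<in> coderiv F xb yb v"
    by (auto simp: coderiv_def minus_unique)
  then show "u \<in> (\<Union>(u, v)\<in>subdiff f (xb, yb). (\<lambda>w. u + w) ` coderiv F xb yb v)" by blast
qed

lemma subdiff_optval_supset:
  assumes val: "optval f F xb = ereal c" "f (xb, yb) = ereal c"
  shows "(\<Union>(u, v)\<in>subdiff f (xb, yb). (\<lambda>w. u + w) ` coderiv F xb yb v) \<subseteq> subdiff (optval f F) xb"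
proof safe
  fix u1 v u2 assume sub: "(u1, v) \<in> subdiff f (xb, yb)" and cod: "u2 \<in> coderiv F xb yb v"
  show "u1 + u2 \<in> subdiff (optval f F) xb"
    unfolding subdiff_def
  proof (intro CollectI allI)
    fix x
    have "ereal ((u1 + u2) \<bullet> (x - xb) + c) \<le> f (x, y)" if "y \<in> F x" for y
    proof -
      have "ereal ((u1, v) \<bullet> ((x, y) - (xb, yb))) \<le> f (x, y) - f (xb, yb)"
        using sub unfolding subdiff_def by blast
      then have "ereal (u1 \<bullet> (x - xb) + v \<bullet> (y - yb) + c) \<le> f (x, y)"
        using val by (simp add: ereal_le_minus)
      moreover have "(u2, - v) \<bullet> ((x, y) - (xb, yb)) \<le> 0"
        using cod that unfolding coderiv_def normal_cone_def gph_def by blast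
      ultimately show ?thesis by (auto simp: inner_add_left elim!: order_trans[rotated])
    qed
    then have "ereal ((u1 + u2) \<bullet> (x - xb) + c) \<le> optval f F x"
      unfolding optval_def by (blast intro: Inf_greatest)
    then show "ereal ((u1 + u2) \<bullet> (x - xb)) \<le> optval f F x - optval f F xb"
      using val by (simp add: ereal_le_minus)
  qed
qed

theorem theorem5p3:
  fixes f :: "'a::euclidean_space \<times> 'b::euclidean_space \<Rightarrow> ereal"
    and F :: "'a \<Rightarrow> 'b set"
    and xb :: 'a and yb :: 'b
  assumes "proper_fun f" and "nearly_convex_fun f"
    and "nearly_convex_map F"
    and "rel_interior (edom f) \<inter> rel_interior (gph F) \<noteq> {}"
    and "optval f F xb \<noteq> \<infinity>" and "optval f F xb \<noteq> -\<infinity>"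
    and "solmap f F xb \<noteq> {}"
    and "yb \<in> solmap f F xb"
  shows "subdiff (optval f F) xb =
           (\<Union>(u, v)\<in>subdiff f (xb, yb). (\<lambda>w. u + w) ` coderiv F xb yb v)"
proof -
  obtain c where c: "optval f F xb = ereal c" using assms(5,6) by (cases "optval f F xb") auto
  moreover have "yb \<in> F xb" "f (xb, yb) = ereal c" using assms(8) c by (auto simp: solmap_def)
  ultimately show ?thesis
    using subdiff_optval_subset[OF assms(1-4)] subdiff_optval_supset by (metis subset_antisym)
qed

end
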